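(* (Principle of Optimality.) Consider an imprecise hidden Markov model as in the context with a fixed output sequence $o_{1:n}\in\mathcal{O}_{1:n}$, under the positivity assumption. Let $k\in\{1,\dots,n-1\}$, $z_{k-1}\in\mathcal{X}_{k-1}$ and $\hat{x}_{k:n}\in\mathcal{X}_{k:n}$. If $\underline{Q}_k(\{\hat{x}_k\}\mid z_{k-1})>0$ and $\underline{S}_k(\{o_k\}\mid\hat{x}_k)>0$, then $$\hat{x}_{k:n}\in\mathrm{opt}(\mathcal{X}_{k:n}\mid z_{k-1},o_{k:n})\ \Rightarrow\ \hat{x}_{k+1:n}\in\mathrm{opt}(\mathcal{X}_{k+1:n}\mid \hat{x}_k,o_{k+1:n}).$$
   Context: Setting: $n\ge1$; $\mathcal{X}_0=\{x_0\}$ a singleton; finite non-empty sets $\mathcal{X}_1,\dots,\mathcal{X}_n$, $\mathcal{O}_1,\dots,\mathcal{O}_n$; $\mathcal{X}_{k:\ell}=\times_{r=k}^\ell\mathcal{X}_r$, $\mathcal{O}_{k:\ell}=\times_{r=k}^\ell\mathcal{O}_r$. Gambles are real maps on finite sets; a coherent lower prevision $\underline{P}$ satisfies $\underline{P}(f)\ge\min f$, $\underline{P}(\lambda f)=\lambda\underline{P}(f)$ for $\lambda\ge0$, $\underline{P}(f+g)\ge\underline{P}(f)+\underline{P}(g)$; $\overline{P}(f)=-\underline{P}(-f)$; $\underline{P}(A)=\underline{P}(\mathbb{I}_A)$. Local models: coherent $\underline{Q}_k(\cdot\mid z_{k-1})$ on gambles on $\mathcal{X}_k$ ($z_{k-1}\in\mathcal{X}_{k-1}$)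 and $\underline{S}_k(\cdot\mid z_k)$ on gambles on $\mathcal{O}_k$ ($z_k\in\mathcal{X}_k$), $k=1,\dots,n$. Joint models: $\underline{E}_n(\cdot\mid z_n):=\underline{S}_n(\cdot\mid z_n)$; for $k<n$, $\underline{E}_k(\cdot\mid X_k)$ (on gambles on $\mathcal{X}_{k+1:n}\times\mathcal{O}_{k:n}$) is the conditionally independent natural extension of $\underline{S}_k(\cdot\mid X_k)$ and $\underline{P}_{k+1}(\cdot\mid X_k)$ (the pointwise smallest separately coherent conditional lower prevision jointly coherent with and extending both, such that given $X_k$, $O_k$ and $(X_{k+1:n},O_{k+1:n})$ are epistemically irrelevant to each other); for gambles $f$ on $\mathcal{X}_{k:n}\times\mathcal{O}_{k:n}$, $\underline{P}_k(f\mid z_{k-1}):=\underline{Q}_k\big(\sum_{z_k}\mathbb{I}_{\{z_k\}}\underline{E}_k(f(z_k,\cdot)\mid z_k)\,\big|\,z_{k-1}\big)$. Standing positivity assumption: $\overline{Q}_k(\{z_k\}\mid z_{k-1})>0$ and $\overline{S}_k(\{o_k\}\mid z_k)>0$ for all $k,z_{k-1},z_k,o_k$. Maximal subsequences: for $k\in\{1,\dots,n\}$ and $z_{k-1}\in\mathcal{X}_{k-1}$, $\hat{x}_{k:n}\in\mathrm{opt}(\mathcal{X}_{k:n}\mid z_{k-1},o_{k:n})$ iff for all $x_{k:n}\in\mathcal{X}_{k:n}$, $\underline{P}_k\big(\mathbb{I}_{o_{k:n}}[\mathbb{I}_{x_{k:n}}-\mathbb{I}_{\hat{x}_{k:n}}]\,\big|\,z_{k-1}\big)\le0$,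 where $\mathbb{I}_{x_{k:n}},\mathbb{I}_{o_{k:n}}$ are indicators of singletons regarded as gambles on $\mathcal{X}_{k:n}\times\mathcal{O}_{k:n}$. *)

theory Defs
  imports Complex_Main "HOL-Library.FuncSet" "HOL-Library.Indicator_Function"
begin

text \<open>Coherence relative to the possibility space A (the three axioms of the paper;
  they imply that P f only depends on the values of f on A).\<close>

definition coherent_on :: "'a set \<Rightarrow> (('a \<Rightarrow> real) \<Rightarrow> real) \<Rightarrow> bool" where
  "coherent_on A P \<longleftrightarrow>
     (\<forall>f. P f \<ge> Min (f ` A)) \<and>
     (\<forall>c f. c \<ge> 0 \<longrightarrow> P (\<lambda>x. c * f x) = c * P f) \<and>
     (\<forall>f g. P (\<lambda>x. f x + g x) \<ge> P f + P g)"

definition upper :: "(('a \<Rightarrow> real) \<Rightarrow> real) \<Rightarrow> ('a \<Rightarrow> real) \<Rightarrow> real" where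
  "upper P f = - P (\<lambda>x. - f x)"

text \<open>Besides the joint P there are the two conditional lower
  previsions expressing epistemic irrelevance in both directions:
  given B = b the model for A is P1 (partition {A \<times> {b} | b \<in> B}), and
  given A = a the model for B is P2 (partition {{a} \<times> B | a \<in> A}).
  The unconditional P corresponds to the trivial partition {A \<times> B}.
  G-gambles and supports as in Walley (1991), Sect. 6.2/7.1.\<close>

definition G0 :: "(('a \<times> 'b \<Rightarrow> real) \<Rightarrow> real) \<Rightarrow> ('a \<times> 'b \<Rightarrow> real) \<Rightarrow> 'a \<times> 'b \<Rightarrow> real" where
  "G0 P f = (\<lambda>w. f w - P f)"

definition G1 :: "(('a \<Rightarrow> real) \<Rightarrow> real) \<Rightarrow> ('a \<times> 'b \<Rightarrow> real) \<Rightarrow> 'a \<times> 'b \<Rightarrow> real" where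
  "G1 P1 f = (\<lambda>(a, b). f (a, b) - P1 (\<lambda>a'. f (a', b)))"

definition G2 :: "(('b \<Rightarrow> real) \<Rightarrow> real) \<Rightarrow> ('a \<times> 'b \<Rightarrow> real) \<Rightarrow> 'a \<times> 'b \<Rightarrow> real" where
  "G2 P2 f = (\<lambda>(a, b). f (a, b) - P2 (\<lambda>b'. f (a, b')))"

definition S0 :: "'a set \<Rightarrow> 'b set \<Rightarrow> ('a \<times> 'b \<Rightarrow> real) \<Rightarrow> ('a \<times> 'b) set" where
  "S0 A B f = (if \<exists>w \<in> A \<times> B. f w \<noteq> 0 then A \<times> B else {})"

definition S1 :: "'a set \<Rightarrow> 'b set \<Rightarrow> ('a \<times> 'b \<Rightarrow> real) \<Rightarrow> ('a \<times> 'b) set" where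
  "S1 A B f = {(a, b) \<in> A \<times> B. \<exists>a' \<in> A. f (a', b) \<noteq> 0}"

definition S2 :: "'a set \<Rightarrow> 'b set \<Rightarrow> ('a \<times> 'b \<Rightarrow> real) \<Rightarrow> ('a \<times> 'b) set" where
  "S2 A B f = {(a, b) \<in> A \<times> B. \<exists>b' \<in> B. f (a, b') \<noteq> 0}"

text \<open>Walley's (joint) coherence of P, P1(.|B), P2(.|A) (Walley 1991, Def. 7.1.4(b)).\<close>

definition jointly_coherent ::
  "'a set \<Rightarrow> 'b set \<Rightarrow> (('a \<times> 'b \<Rightarrow> real) \<Rightarrow> real) \<Rightarrow>
   (('a \<Rightarrow> real) \<Rightarrow> real) \<Rightarrow> (('b \<Rightarrow> real) \<Rightarrow> real) \<Rightarrow> bool" where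
  "jointly_coherent A B P P1 P2 \<longleftrightarrow>
    (\<forall>f0 f1 f2 g.
       let D = (\<lambda>w. G0 P f0 w + G1 P1 f1 w + G2 P2 f2 w);
           U = S0 A B f0 \<union> S1 A B f1 \<union> S2 A B f2
       in Max ((\<lambda>w. D w - (g w - P g)) ` (A \<times> B \<union> U)) \<ge> 0
        \<and> (\<forall>b \<in> B. Max ((\<lambda>w. D w - indicator (A \<times> {b}) w * (g w - P1 (\<lambda>a. g (a, b))))
                          ` (A \<times> {b} \<union> U)) \<ge> 0)
        \<and> (\<forall>a \<in> A. Max ((\<lambda>w. D w - indicator ({a} \<times> B) w * (g w - P2 (\<lambda>b. g (a, b))))
                          ` ({a} \<times> B \<union> U)) \<ge> 0))"

definition indep_product ::
  "'a set \<Rightarrow> 'b set \<Rightarrow> (('a \<Rightarrow> real) \<Rightarrow> real) \<Rightarrow> (('b \<Rightarrow> real) \<Rightarrow> real) \<Rightarrow>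
   (('a \<times> 'b \<Rightarrow> real) \<Rightarrow> real) \<Rightarrow> bool" where
  "indep_product A B P1 P2 P \<longleftrightarrow>
     coherent_on (A \<times> B) P \<and>
     (\<forall>g. P (\<lambda>(a, b). g a) = P1 g) \<and>
     (\<forall>h. P (\<lambda>(a, b). h b) = P2 h) \<and>
     jointly_coherent A B P P1 P2"

definition indep_nat_ext ::
  "'a set \<Rightarrow> 'b set \<Rightarrow> (('a \<Rightarrow> real) \<Rightarrow> real) \<Rightarrow> (('b \<Rightarrow> real) \<Rightarrow> real) \<Rightarrow>
   ('a \<times> 'b \<Rightarrow> real) \<Rightarrow> real" where
  "indep_nat_ext A B P1 P2 f = Inf {P f | P. indep_product A B P1 P2 P}"

text \<open>All state spaces X_k live in one type 'x (carriers Xs k), all output spaces in 'o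
  (carriers Os k). A state sequence x_{k:n} is an element of PiE {k..n} Xs, an output
  sequence o_{k:n} an element of PiE {k..n} Os. Local models: Q k z (gambles on Xs k), z \<in> Xs (k-1);
  S k z (gambles on Os k), z \<in> Xs k.

  Erec n Xs Os Q S j z is E_{n-j}(. | z) (a lower prevision on gambles on
  X_{n-j+1:n} \<times> O_{n-j:n}).\<close>

type_synonym ('x, 'o) seqgamble = "(nat \<Rightarrow> 'x) \<times> (nat \<Rightarrow> 'o) \<Rightarrow> real"

fun Erec :: "nat \<Rightarrow> (nat \<Rightarrow> 'x set) \<Rightarrow> (nat \<Rightarrow> 'o set) \<Rightarrow>
    (nat \<Rightarrow> 'x \<Rightarrow> ('x \<Rightarrow> real) \<Rightarrow> real) \<Rightarrow> (nat \<Rightarrow> 'x \<Rightarrow> ('o \<Rightarrow> real) \<Rightarrow> real) \<Rightarrow>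
    nat \<Rightarrow> 'x \<Rightarrow> ('x, 'o) seqgamble \<Rightarrow> real" where
  "Erec n Xs Os Q S 0 z g = S n z (\<lambda>on. g (\<lambda>_. undefined, (\<lambda>_. undefined)(n := on)))"
| "Erec n Xs Os Q S (Suc j) z g =
     (let k = n - Suc j in
      indep_nat_ext (Os k) ((PiE {Suc k..n} Xs) \<times> (PiE {Suc k..n} Os))
        (S k z)
        (\<lambda>h. Q (Suc k) z (\<lambda>zk. Erec n Xs Os Q S j zk (\<lambda>(x, y). h (x(Suc k := zk), y))))
        (\<lambda>(ok, (x, p')). g (x, p'(k := ok))))"

definition Ehmm where
  "Ehmm n Xs Os Q S k = Erec n Xs Os Q S (n - k)"

definition Phmm :: "nat \<Rightarrow> (nat \<Rightarrow> 'x set) \<Rightarrow> (nat \<Rightarrow> 'o set) \<Rightarrow>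
    (nat \<Rightarrow> 'x \<Rightarrow> ('x \<Rightarrow> real) \<Rightarrow> real) \<Rightarrow> (nat \<Rightarrow> 'x \<Rightarrow> ('o \<Rightarrow> real) \<Rightarrow> real) \<Rightarrow>
    nat \<Rightarrow> 'x \<Rightarrow> ('x, 'o) seqgamble \<Rightarrow> real" where
  "Phmm n Xs Os Q S k z f =
     Q k z (\<lambda>zk. Ehmm n Xs Os Q S k zk (\<lambda>(x, y). f (x(k := zk), y)))"

text \<open>Maximal subsequences opt(X_{k:n} | z, o_{k:n}); the full output sequence o is given
  as a map, only its values on {k..n} matter.\<close>
definition opt :: "nat \<Rightarrow> (nat \<Rightarrow> 'x set) \<Rightarrow> (nat \<Rightarrow> 'o set) \<Rightarrow>
    (nat \<Rightarrow> 'x \<Rightarrow> ('x \<Rightarrow> real) \<Rightarrow> real) \<Rightarrow> (nat \<Rightarrow> 'x \<Rightarrow> ('o \<Rightarrow> real) \<Rightarrow> real) \<Rightarrow>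
    nat \<Rightarrow> 'x \<Rightarrow> (nat \<Rightarrow> 'o) \<Rightarrow> (nat \<Rightarrow> 'x) set" where
  "opt n Xs Os Q S k z os =
     {xh \<in> PiE {k..n} Xs. \<forall>x \<in> PiE {k..n} Xs.
        Phmm n Xs Os Q S k z
          (\<lambda>(x', p'). (if \<forall>i \<in> {k..n}. p' i = os i then 1 else 0) *
                       ((if \<forall>i \<in> {k..n}. x' i = x i then 1 else 0)
                        - (if \<forall>i \<in> {k..n}. x' i = xh i then 1 else 0))) \<le> 0}"

end

theory Submission
  imports Defs
begin

text \<open>Write \<open>G\<close> for the gamble of \<open>opt\<close> at stage \<open>k\<close> comparing \<open>x(k := xh k)\<close> with \<open>xh\<close>, and
  \<open>G'\<close> for the one at stage \<open>k + 1\<close> comparing \<open>x\<close> with \<open>xh\<close>.  \<open>G\<close> vanishes unless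
  \<open>X\<^sub>k = xh k\<close>, and there it factorises as \<open>I{o\<^sub>k}(O\<^sub>k) * G'\<close>.  Every independent product
  \<open>P\<close> of two coherent lower previsions satisfies \<open>P (I{o} \<otimes> h) \<ge> P\<^sub>1 {o} * P\<^sub>2 h\<close> whenever
  \<open>P\<^sub>2 h \<ge> 0\<close>, hence so does their independent natural extension \<open>E\<^sub>k\<close>, which yields
  \<open>P\<^sub>k (G | z) \<ge> Q\<^sub>k ({xh k} | z) * S\<^sub>k ({o\<^sub>k} | xh k) * P\<^sub>k\<^sub>+\<^sub>1 (G' | xh k)\<close>.  If the tail of
  \<open>xh\<close> were not maximal, some \<open>G'\<close> would have positive lower prevision, so \<open>P\<^sub>k (G | z) > 0\<close>,
  contradicting the maximality of \<open>xh\<close>.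

  The independent natural extension is an infimum over independent products, so the argument
  needs one to exist: the strong product, the lower envelope of the products of elements of
  the two credal sets (nonempty by a finite Hahn--Banach argument).  Its joint coherence with
  the epistemic irrelevance conditionals is where positivity is used, and positivity of
  \<open>E\<^sub>k\<close> and \<open>P\<^sub>k\<^sub>+\<^sub>1\<close> propagates backwards along the chain.\<close>

section \<open>Coherent lower previsions\<close>

lemma coherent_on_ge_Min: "coherent_on A P \<Longrightarrow> Min (f ` A) \<le> P f"
  unfolding coherent_on_def by blast

lemma coherent_on_scale: "coherent_on A P \<Longrightarrow> 0 \<le> c \<Longrightarrow> P (\<lambda>x. c * f x) = c * P f"
  unfolding coherent_on_def by blast

lemma coherent_on_superadd: "coherent_on A P \<Longrightarrow> P f + P g \<le> P (\<lambda>x. f x + g x)"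
  unfolding coherent_on_def by blast

lemma coherent_on_zero: "coherent_on A P \<Longrightarrow> P (\<lambda>x. 0) = 0"
  using coherent_on_scale[of A P 0 "\<lambda>x. 0"] by simp

lemma coherent_on_mono:
  assumes P: "coherent_on A P" and A: "finite A" "A \<noteq> {}" and le: "\<And>x. x \<in> A \<Longrightarrow> g x \<le> f x"
  shows "P g \<le> P f"
proof -
  have "0 \<le> Min ((\<lambda>x. f x - g x) ` A)"
    using A le by (simp add: Min_ge_iff)
  also have "\<dots> \<le> P (\<lambda>x. f x - g x)"
    by (rule coherent_on_ge_Min[OF P])
  finally have "P g \<le> P g + P (\<lambda>x. f x - g x)"
    by simp
  also have "\<dots> \<le> P (\<lambda>x. g x + (f x - g x))"
    by (rule coherent_on_superadd[OF P])
  finally show ?thesis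
    by simp
qed

lemma coherent_on_cong:
  assumes "coherent_on A P" "finite A" "A \<noteq> {}" "\<And>x. x \<in> A \<Longrightarrow> f x = g x"
  shows "P f = P g"
  by (intro antisym coherent_on_mono[OF assms(1-3)]) (simp_all add: assms(4))

lemma coherent_on_nonneg:
  assumes "coherent_on A P" "finite A" "A \<noteq> {}" "\<And>x. x \<in> A \<Longrightarrow> 0 \<le> f x"
  shows "0 \<le> P f"
  using coherent_on_mono[OF assms(1-3), of "\<lambda>x. 0" f] coherent_on_zero[OF assms(1)] assms(4)
  by simp

lemma coherent_on_const:
  assumes P: "coherent_on A P" and "A \<noteq> {}"
  shows "P (\<lambda>x. c) = c"
proof -
  have "c \<le> P (\<lambda>x. c)" "- c \<le> P (\<lambda>x. - c)"
    using coherent_on_ge_Min[OF P, of "\<lambda>x. c"] coherent_on_ge_Min[OF P, of "\<lambda>x. - c"] \<open>A \<noteq> {}\<close>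
    by (simp_all add: image_constant_conv)
  moreover have "P (\<lambda>x. c) + P (\<lambda>x. - c) \<le> 0"
    using coherent_on_superadd[OF P, of "\<lambda>x. c" "\<lambda>x. - c"] coherent_on_zero[OF P] by simp
  ultimately show ?thesis
    by linarith
qed

lemma coherent_on_ge_scaled_indicator:
  assumes P: "coherent_on A P" and A: "finite A" "A \<noteq> {}"
    and c: "0 \<le> c" and le: "\<And>x. x \<in> A \<Longrightarrow> c * indicator {a} x \<le> f x"
  shows "c * P (indicator {a}) \<le> P f"
  using coherent_on_mono[OF P A, of "\<lambda>x. c * indicator {a} x" f] le
    coherent_on_scale[OF P c, of "indicator {a}"]
  by simp

lemma upper_subadd: "coherent_on A P \<Longrightarrow> upper P (\<lambda>x. f x + g x) \<le> upper P f + upper P g"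
  unfolding upper_def using coherent_on_superadd[of A P "\<lambda>x. - f x" "\<lambda>x. - g x"] by simp

lemma upper_scale: "coherent_on A P \<Longrightarrow> 0 \<le> c \<Longrightarrow> upper P (\<lambda>x. c * f x) = c * upper P f"
  unfolding upper_def using coherent_on_scale[of A P c "\<lambda>x. - f x"] by simp

lemma coherent_on_scale_le_upper:
  assumes P: "coherent_on A P"
  shows "c * P f \<le> upper P (\<lambda>x. c * f x)"
proof (cases "0 \<le> c")
  case True
  have "P (\<lambda>x. c * f x) \<le> upper P (\<lambda>x. c * f x)"
    using coherent_on_superadd[OF P, of "\<lambda>x. c * f x" "\<lambda>x. - (c * f x)"] coherent_on_zero[OF P]
    by (simp add: upper_def)
  with True show ?thesis
    using coherent_on_scale[OF P True] by simp
next
  case False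
  then show ?thesis
    using coherent_on_scale[OF P, of "- c" f] by (simp add: upper_def)
qed

definition coherent_positive_on :: "'a set \<Rightarrow> (('a \<Rightarrow> real) \<Rightarrow> real) \<Rightarrow> bool" where
  "coherent_positive_on A P \<longleftrightarrow> coherent_on A P \<and> (\<forall>a\<in>A. 0 < upper P (indicator {a}))"

lemma coherent_positive_on_compose:
  assumes P: "coherent_positive_on A P" and A: "finite A" "A \<noteq> {}" and phi: "bij_betw phi A C"
  shows "coherent_positive_on C (\<lambda>g. P (\<lambda>x. g (phi x)))"
proof -
  have coh: "coherent_on A P"
    using P by (simp add: coherent_positive_on_def)
  have surj: "phi ` A = C" and inj: "inj_on phi A"
    using phi by (simp_all add: bij_betw_def)
  have "coherent_on C (\<lambda>g. P (\<lambda>x. g (phi x)))"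
    unfolding coherent_on_def
  proof (intro conjI allI impI)
    fix g :: "_ \<Rightarrow> real"
    have "g ` C = (\<lambda>x. g (phi x)) ` A"
      unfolding surj[symmetric] by (rule image_image)
    then show "Min (g ` C) \<le> P (\<lambda>x. g (phi x))"
      using coherent_on_ge_Min[OF coh] by metis
  next
    fix c :: real and g :: "_ \<Rightarrow> real"
    assume "0 \<le> c"
    then show "P (\<lambda>x. c * g (phi x)) = c * P (\<lambda>x. g (phi x))"
      by (rule coherent_on_scale[OF coh])
  next
    fix f g :: "_ \<Rightarrow> real"
    show "P (\<lambda>x. f (phi x)) + P (\<lambda>x. g (phi x)) \<le> P (\<lambda>x. f (phi x) + g (phi x))"
      by (rule coherent_on_superadd[OF coh])
  qed
  moreover have "0 < upper (\<lambda>g. P (\<lambda>x. g (phi x))) (indicator {c})" if c: "c \<in> C" for c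
  proof -
    define a where "a = inv_into A phi c"
    have a: "a \<in> A" "phi a = c"
      using c unfolding a_def surj[symmetric] by (simp_all add: inv_into_into f_inv_into_f)
    have "P (\<lambda>x. - indicator {c} (phi x)) = P (\<lambda>x. - indicator {a} x)"
      by (rule coherent_on_cong[OF coh A]) (use inj_on_eq_iff[OF inj _ a(1)] a(2) in \<open>simp add: indicator_def\<close>)
    then have "upper (\<lambda>g. P (\<lambda>x. g (phi x))) (indicator {c}) = upper P (indicator {a})"
      by (simp add: upper_def)
    then show ?thesis
      using P a(1) by (simp add: coherent_positive_on_def)
  qed
  ultimately show ?thesis
    by (simp add: coherent_positive_on_def)
qed

text \<open>\<open>\<lambda>h. Q (\<lambda>z. E z (\<lambda>w. h (phi z w)))\<close> is the marginal extension of \<open>Q\<close> and the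
  conditional models \<open>E z\<close>, where \<open>phi z w\<close> glues the value \<open>z\<close> into \<open>w\<close>.\<close>

lemma coherent_on_marginal_ext:
  assumes Q: "coherent_on X Q" "finite X" "X \<noteq> {}"
    and E: "\<And>z. z \<in> X \<Longrightarrow> coherent_on C (E z)" "finite C" "C \<noteq> {}"
    and B: "finite B" and phi: "\<And>z w. z \<in> X \<Longrightarrow> w \<in> C \<Longrightarrow> phi z w \<in> B"
  shows "coherent_on B (\<lambda>h. Q (\<lambda>z. E z (\<lambda>w. h (phi z w))))"
  unfolding coherent_on_def
proof (intro conjI allI impI)
  fix h :: "_ \<Rightarrow> real"
  have "Min (h ` B) \<le> E z (\<lambda>w. h (phi z w))" if z: "z \<in> X" for z
  proof -
    have "Min (h ` B) \<le> Min ((\<lambda>w. h (phi z w)) ` C)"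
      by (rule Min_antimono) (use E(3) B phi[OF z] in auto)
    also have "\<dots> \<le> E z (\<lambda>w. h (phi z w))"
      by (rule coherent_on_ge_Min[OF E(1)[OF z]])
    finally show ?thesis .
  qed
  then have "Min (h ` B) \<le> Min ((\<lambda>z. E z (\<lambda>w. h (phi z w))) ` X)"
    using Q(2,3) by (simp add: Min_ge_iff)
  also have "\<dots> \<le> Q (\<lambda>z. E z (\<lambda>w. h (phi z w)))"
    by (rule coherent_on_ge_Min[OF Q(1)])
  finally show "Min (h ` B) \<le> Q (\<lambda>z. E z (\<lambda>w. h (phi z w)))" .
next
  fix c :: real and h :: "_ \<Rightarrow> real"
  assume c: "0 \<le> c"
  have "Q (\<lambda>z. E z (\<lambda>w. c * h (phi z w))) = Q (\<lambda>z. c * E z (\<lambda>w. h (phi z w)))"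
    by (rule coherent_on_cong[OF Q]) (rule coherent_on_scale[OF E(1) c])
  also have "\<dots> = c * Q (\<lambda>z. E z (\<lambda>w. h (phi z w)))"
    by (rule coherent_on_scale[OF Q(1) c])
  finally show "Q (\<lambda>z. E z (\<lambda>w. c * h (phi z w))) = c * Q (\<lambda>z. E z (\<lambda>w. h (phi z w)))" .
next
  fix f g :: "_ \<Rightarrow> real"
  have "Q (\<lambda>z. E z (\<lambda>w. f (phi z w))) + Q (\<lambda>z. E z (\<lambda>w. g (phi z w)))
      \<le> Q (\<lambda>z. E z (\<lambda>w. f (phi z w)) + E z (\<lambda>w. g (phi z w)))"
    by (rule coherent_on_superadd[OF Q(1)])
  also have "\<dots> \<le> Q (\<lambda>z. E z (\<lambda>w. f (phi z w) + g (phi z w)))"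
    by (rule coherent_on_mono[OF Q]) (rule coherent_on_superadd[OF E(1)])
  finally show "Q (\<lambda>z. E z (\<lambda>w. f (phi z w))) + Q (\<lambda>z. E z (\<lambda>w. g (phi z w)))
      \<le> Q (\<lambda>z. E z (\<lambda>w. f (phi z w) + g (phi z w)))" .
qed

lemma upper_marginal_ext_indicator_pos:
  assumes Q: "coherent_on X Q" "finite X" "X \<noteq> {}"
    and E: "\<And>z. z \<in> X \<Longrightarrow> coherent_on C (E z)" "finite C" "C \<noteq> {}"
    and z0: "z0 \<in> X" "0 < upper Q (indicator {z0})"
    and w0: "w0 \<in> C" "0 < upper (E z0) (indicator {w0})"
    and phi: "\<And>z w. z \<in> X \<Longrightarrow> w \<in> C \<Longrightarrow> phi z w = b \<longleftrightarrow> z = z0 \<and> w = w0"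
  shows "0 < upper (\<lambda>h. Q (\<lambda>z. E z (\<lambda>w. h (phi z w)))) (indicator {b})"
proof -
  define u where "u = upper (E z0) (indicator {w0})"
  have inner: "E z (\<lambda>w. - indicator {b} (phi z w)) = u * - indicator {z0} z" if z: "z \<in> X" for z
  proof (cases "z = z0")
    case True
    have "E z0 (\<lambda>w. - indicator {b} (phi z0 w)) = E z0 (\<lambda>w. - indicator {w0} w)"
      by (intro coherent_on_cong[OF E(1)[OF z0(1)] E(2,3)]) (simp add: phi[OF z0(1)] indicator_def)
    then show ?thesis
      using True by (simp add: u_def upper_def)
  next
    case False
    have "E z (\<lambda>w. - indicator {b} (phi z w)) = E z (\<lambda>w. 0)"
      by (intro coherent_on_cong[OF E(1)[OF z] E(2,3)]) (simp add: phi[OF z] False indicator_def)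
    then show ?thesis
      using False coherent_on_zero[OF E(1)[OF z]] by simp
  qed
  have "Q (\<lambda>z. E z (\<lambda>w. - indicator {b} (phi z w))) = Q (\<lambda>z. u * - indicator {z0} z)"
    using inner by (rule coherent_on_cong[OF Q])
  also have "\<dots> = - (u * upper Q (indicator {z0}))"
    using coherent_on_scale[OF Q(1), of u "\<lambda>z. - indicator {z0} z"] w0(2)
    by (simp add: u_def upper_def)
  finally show ?thesis
    using z0(2) w0(2) by (simp add: u_def upper_def mult_neg_neg)
qed

lemma coherent_positive_on_marginal_ext:
  assumes Q: "coherent_positive_on X Q" "finite X" "X \<noteq> {}"
    and E: "\<And>z. z \<in> X \<Longrightarrow> coherent_positive_on C (E z)" "finite C" "C \<noteq> {}"
    and phi: "bij_betw (\<lambda>(z, w). phi z w) (X \<times> C) B"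
  shows "coherent_positive_on B (\<lambda>h. Q (\<lambda>z. E z (\<lambda>w. h (phi z w))))"
proof -
  have cQ: "coherent_on X Q" and cE: "\<And>z. z \<in> X \<Longrightarrow> coherent_on C (E z)"
    using Q(1) E(1) by (simp_all add: coherent_positive_on_def)
  have "finite B"
    using bij_betw_finite[OF phi] Q(2) E(2) by simp
  moreover have "phi z w \<in> B" if "z \<in> X" "w \<in> C" for z w
    using bij_betw_imp_surj_on[OF phi] that by auto
  moreover have "0 < upper (\<lambda>h. Q (\<lambda>z. E z (\<lambda>w. h (phi z w)))) (indicator {b})" if b: "b \<in> B" for b
  proof -
    obtain z0 w0 where zw: "z0 \<in> X" "w0 \<in> C" "phi z0 w0 = b"
      using bij_betw_imp_surj_on[OF phi] b by auto
    have pos: "0 < upper Q (indicator {z0})" "0 < upper (E z0) (indicator {w0})"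
      using Q(1) E(1)[OF zw(1)] zw by (simp_all add: coherent_positive_on_def)
    have iff: "phi z w = b \<longleftrightarrow> z = z0 \<and> w = w0" if "z \<in> X" "w \<in> C" for z w
      using inj_on_eq_iff[OF bij_betw_imp_inj_on[OF phi], of "(z, w)" "(z0, w0)"] zw that by simp
    show ?thesis
      by (rule upper_marginal_ext_indicator_pos[where E = E and phi = phi,
            OF cQ Q(2,3) cE E(2,3) zw(1) pos(1) zw(2) pos(2) iff])
  qed
  ultimately show ?thesis
    using coherent_on_marginal_ext[where E = E and phi = phi, OF cQ Q(2,3) cE E(2,3)]
    by (simp add: coherent_positive_on_def)
qed

section \<open>Credal sets and the lower envelope theorem\<close>

definition expect :: "'a set \<Rightarrow> ('a \<Rightarrow> real) \<Rightarrow> ('a \<Rightarrow> real) \<Rightarrow> real" where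
  "expect A p f = (\<Sum>a\<in>A. p a * f a)"

definition credal_set :: "'a set \<Rightarrow> (('a \<Rightarrow> real) \<Rightarrow> real) \<Rightarrow> ('a \<Rightarrow> real) set" where
  "credal_set A P = {p. (\<forall>a\<in>A. 0 \<le> p a) \<and> sum p A = 1 \<and> (\<forall>f. P f \<le> expect A p f)}"

lemma credal_set_nonneg: "p \<in> credal_set A P \<Longrightarrow> a \<in> A \<Longrightarrow> 0 \<le> p a"
  unfolding credal_set_def by blast

lemma credal_set_sum: "p \<in> credal_set A P \<Longrightarrow> sum p A = 1"
  unfolding credal_set_def by blast

lemma credal_set_dominates: "p \<in> credal_set A P \<Longrightarrow> P f \<le> expect A p f"
  unfolding credal_set_def by blast

lemma expect_uminus: "expect A p (\<lambda>x. - f x) = - expect A p f"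
  unfolding expect_def by (simp add: sum_negf)

lemma expect_const: "expect A p (\<lambda>x. c) = c * sum p A"
  unfolding expect_def by (simp add: sum_distrib_left mult.commute)

lemma expect_indicator: "finite A \<Longrightarrow> a \<in> A \<Longrightarrow> expect A p (indicator {a}) = p a"
  unfolding expect_def indicator_def by (simp add: of_bool_def if_distrib sum.delta cong: if_cong)

lemma coherent_on_expect:
  assumes A: "finite A" and p: "\<And>a. a \<in> A \<Longrightarrow> 0 \<le> p a" "sum p A = 1"
  shows "coherent_on A (expect A p)"
  unfolding coherent_on_def
proof (intro conjI allI impI)
  fix f
  show "Min (f ` A) \<le> expect A p f"
  proof (cases "A = {}")
    case True
    then show ?thesis
      using p(2) by simp
  next
    case False
    have "(\<Sum>a\<in>A. p a * Min (f ` A)) \<le> (\<Sum>a\<in>A. p a * f a)"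
      by (rule sum_mono) (use p(1) A in \<open>auto intro: mult_left_mono\<close>)
    then show ?thesis
      unfolding expect_def using p(2) by (simp add: sum_distrib_right[symmetric])
  qed
qed (simp_all add: expect_def sum_distrib_left sum.distrib algebra_simps)

text \<open>Finite-dimensional Hahn--Banach: a linear functional on the span of
  \<open>hs 0, \<dots>, hs (m - 1)\<close> dominated by a sublinear \<open>q\<close> extends one generator at a time.\<close>

definition dominated_on_span ::
  "(('a \<Rightarrow> real) \<Rightarrow> real) \<Rightarrow> nat \<Rightarrow> (nat \<Rightarrow> 'a \<Rightarrow> real) \<Rightarrow> (nat \<Rightarrow> real) \<Rightarrow> bool" where
  "dominated_on_span q m hs ls \<longleftrightarrow> (\<forall>c. (\<Sum>i<m. c i * ls i) \<le> q (\<lambda>x. \<Sum>i<m. c i * hs i x))"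

lemma dominated_on_span_Suc:
  fixes q :: "('a \<Rightarrow> real) \<Rightarrow> real"
  assumes hom: "\<And>c f. 0 \<le> c \<Longrightarrow> q (\<lambda>x. c * f x) = c * q f"
    and dom: "dominated_on_span q m hs ls"
    and below: "\<And>c. (\<Sum>i<m. c i * ls i) - q (\<lambda>x. (\<Sum>i<m. c i * hs i x) - hs m x) \<le> l"
    and above: "\<And>c. l \<le> q (\<lambda>x. (\<Sum>i<m. c i * hs i x) + hs m x) - (\<Sum>i<m. c i * ls i)"
  shows "dominated_on_span q (Suc m) hs (ls(m := l))"
  unfolding dominated_on_span_def
proof
  fix c :: "nat \<Rightarrow> real"
  consider "c m = 0" | "0 < c m" | "c m < 0"
    by linarith
  then show "(\<Sum>i<Suc m. c i * (ls(m := l)) i) \<le> q (\<lambda>x. \<Sum>i<Suc m. c i * hs i x)"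
  proof cases
    case 1
    then show ?thesis
      using dom by (simp add: dominated_on_span_def)
  next
    case 2
    define d where "d i = c i / c m" for i
    define F where "F = (\<lambda>x. (\<Sum>i<m. d i * hs i x) + hs m x)"
    have "c m * l \<le> c m * (q F - (\<Sum>i<m. d i * ls i))"
      using above[of d] 2 by (simp add: F_def)
    also have "\<dots> = q (\<lambda>x. c m * F x) - (\<Sum>i<m. c i * ls i)"
      using 2 hom[of "c m" F] by (simp add: d_def right_diff_distrib sum_distrib_left)
    finally have "(\<Sum>i<m. c i * ls i) + c m * l \<le> q (\<lambda>x. c m * F x)"
      by simp
    also have "(\<lambda>x. c m * F x) = (\<lambda>x. \<Sum>i<Suc m. c i * hs i x)"
      using 2 by (simp add: F_def d_def distrib_left sum_distrib_left)
    finally show ?thesis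
      by simp
  next
    case 3
    define d where "d i = c i / - c m" for i
    define F where "F = (\<lambda>x. (\<Sum>i<m. d i * hs i x) - hs m x)"
    have "(\<Sum>i<m. c i * ls i) - q (\<lambda>x. - c m * F x) = - c m * ((\<Sum>i<m. d i * ls i) - q F)"
      using 3 hom[of "- c m" F] by (simp add: d_def right_diff_distrib sum_distrib_left)
    also have "\<dots> \<le> - c m * l"
      using below[of d] 3 by (simp add: F_def mult_left_mono)
    finally have "(\<Sum>i<m. c i * ls i) + c m * l \<le> q (\<lambda>x. - c m * F x)"
      by simp
    also have "(\<lambda>x. - c m * F x) = (\<lambda>x. \<Sum>i<Suc m. c i * hs i x)"
      using 3 by (simp add: F_def d_def right_diff_distrib sum_distrib_left)
    finally show ?thesis
      by simp
  qed
qed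

lemma dominated_on_span_extend:
  fixes q :: "('a \<Rightarrow> real) \<Rightarrow> real"
  assumes sub: "\<And>f g. q (\<lambda>x. f x + g x) \<le> q f + q g"
    and hom: "\<And>c f. 0 \<le> c \<Longrightarrow> q (\<lambda>x. c * f x) = c * q f"
    and dom: "dominated_on_span q m hs ls"
  shows "\<exists>l. dominated_on_span q (Suc m) hs (ls(m := l))"
proof -
  define lo where "lo c = (\<Sum>i<m. c i * ls i) - q (\<lambda>x. (\<Sum>i<m. c i * hs i x) - hs m x)" for c
  define up where "up c = q (\<lambda>x. (\<Sum>i<m. c i * hs i x) + hs m x) - (\<Sum>i<m. c i * ls i)" for c
  have lo_up: "lo c \<le> up d" for c d
  proof -
    have "(\<Sum>i<m. (c i + d i) * ls i) \<le> q (\<lambda>x. \<Sum>i<m. (c i + d i) * hs i x)"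
      using dom[unfolded dominated_on_span_def, rule_format, of "\<lambda>i. c i + d i"] by simp
    also have "\<dots> \<le> q (\<lambda>x. (\<Sum>i<m. c i * hs i x) - hs m x) + q (\<lambda>x. (\<Sum>i<m. d i * hs i x) + hs m x)"
      using sub[of "\<lambda>x. (\<Sum>i<m. c i * hs i x) - hs m x" "\<lambda>x. (\<Sum>i<m. d i * hs i x) + hs m x"]
      by (simp add: distrib_right sum.distrib)
    finally show ?thesis
      unfolding lo_def up_def by (simp add: distrib_right sum.distrib)
  qed
  have "bdd_above (range lo)"
    using lo_up by (intro bdd_aboveI[of _ "up (\<lambda>_. 0)"]) auto
  then have "lo c \<le> Sup (range lo)" "Sup (range lo) \<le> up c" for c
    using lo_up by (auto intro: cSup_upper cSup_least)
  then show ?thesis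
    using dominated_on_span_Suc[OF hom dom] unfolding lo_def up_def by blast
qed

lemma credal_set_if_dominated:
  assumes P: "coherent_on A P" and A: "finite A" "A \<noteq> {}"
    and dom: "\<And>r f. r * P g + expect A p f \<le> upper P (\<lambda>x. r * g x + f x)"
  shows "p \<in> credal_set A P" "expect A p g = P g"
proof -
  have upper_zero: "upper P (\<lambda>x. 0) = 0"
    using coherent_on_zero[OF P] by (simp add: upper_def)
  have le: "P f \<le> expect A p f" for f
    using dom[of 0 "\<lambda>x. - f x"] by (simp add: upper_def expect_uminus)
  have "0 \<le> p a" if "a \<in> A" for a
    using le[of "indicator {a}"] coherent_on_nonneg[OF P A, of "indicator {a}"]
      expect_indicator[OF A(1) that]
    by simp
  moreover have "sum p A = 1"
    using le[of "\<lambda>x. 1"] le[of "\<lambda>x. - 1"] coherent_on_const[OF P A(2)] by (simp add: expect_const)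
  ultimately show "p \<in> credal_set A P"
    using le by (simp add: credal_set_def)
  show "expect A p g = P g"
    using dom[of 1 "\<lambda>x. - g x"] dom[of "- 1" g] upper_zero by (simp add: expect_uminus)
qed

lemma sum_enumerate_indicator:
  assumes "bij_betw e {..<N} A" "finite A" "x \<in> A"
  shows "(\<Sum>i<N. f (e i) * indicator {e i} x) = (f x :: real)"
proof -
  have "(\<Sum>i<N. f (e i) * indicator {e i} x) = (\<Sum>a\<in>A. f a * indicator {a} x)"
    using sum.reindex_bij_betw[OF assms(1), of "\<lambda>a. f a * indicator {a} x"] by simp
  also have "\<dots> = f x"
    using assms(2,3) by (simp add: indicator_def of_bool_def if_distrib sum.delta cong: if_cong)
  finally show ?thesis .
qed

lemma dominated_on_span_upper:
  assumes P: "coherent_on A P"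
  shows "\<exists>ls. ls 0 = P (hs 0) \<and> dominated_on_span (upper P) (Suc m) hs ls"
proof (induction m)
  case 0
  have "dominated_on_span (upper P) 1 hs (\<lambda>_. P (hs 0))"
    using coherent_on_scale_le_upper[OF P] by (simp add: dominated_on_span_def)
  then show ?case
    by auto
next
  case (Suc m)
  then obtain ls where ls: "ls 0 = P (hs 0)" "dominated_on_span (upper P) (Suc m) hs ls"
    by blast
  have sub: "\<And>f g. upper P (\<lambda>x. f x + g x) \<le> upper P f + upper P g"
    by (rule upper_subadd[OF P])
  have hom: "\<And>c f. 0 \<le> c \<Longrightarrow> upper P (\<lambda>x. c * f x) = c * upper P f"
    by (rule upper_scale[OF P])
  obtain l where "dominated_on_span (upper P) (Suc (Suc m)) hs (ls(Suc m := l))"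
    using dominated_on_span_extend[OF sub _ ls(2)] hom by blast
  then show ?case
    using ls(1) by (metis fun_upd_other nat.distinct(1))
qed

text \<open>Extend \<open>g \<mapsto> P g\<close> along \<open>g\<close> followed by the indicators of the atoms of \<open>A\<close>; the values
  at the indicators form the required element of the credal set.\<close>

theorem lower_envelope:
  assumes P: "coherent_on A P" and A: "finite A" "A \<noteq> {}"
  shows "\<exists>p\<in>credal_set A P. expect A p g = P g"
proof -
  obtain e where e: "bij_betw e {..<card A} A"
    using ex_bij_betw_nat_finite[OF A(1)] by (auto simp: atLeast0LessThan)
  define hs where "hs = case_nat g (\<lambda>i. indicator {e i})"
  obtain ls where ls: "ls 0 = P g" "dominated_on_span (upper P) (Suc (card A)) hs ls"
    using dominated_on_span_upper[OF P, of hs "card A"] by (auto simp: hs_def)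
  define p where "p a = ls (Suc (inv_into {..<card A} e a))" for a
  have "r * P g + expect A p f \<le> upper P (\<lambda>x. r * g x + f x)" for r f
  proof -
    define c where "c = case_nat r (\<lambda>i. f (e i))"
    have "(\<Sum>i<Suc (card A). c i * ls i) = r * P g + (\<Sum>i<card A. f (e i) * ls (Suc i))"
      by (simp only: sum.lessThan_Suc_shift) (simp add: c_def ls(1))
    also have "(\<Sum>i<card A. f (e i) * ls (Suc i)) = expect A p f"
      using sum.reindex_bij_betw[OF e, of "\<lambda>a. p a * f a"] bij_betw_inv_into_left[OF e]
      by (simp add: p_def expect_def mult.commute)
    finally have "(\<Sum>i<Suc (card A). c i * ls i) = r * P g + expect A p f" .
    moreover have "upper P (\<lambda>x. \<Sum>i<Suc (card A). c i * hs i x) = upper P (\<lambda>x. r * g x + f x)"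
      unfolding upper_def
      by (rule arg_cong[of _ _ uminus], rule coherent_on_cong[OF P A])
        (simp only: sum.lessThan_Suc_shift, simp add: c_def hs_def sum_enumerate_indicator[OF e A(1)])
    ultimately show ?thesis
      using ls(2) unfolding dominated_on_span_def by metis
  qed
  then show ?thesis
    using credal_set_if_dominated[OF P A] by blast
qed

lemma credal_set_nonempty: "coherent_on A P \<Longrightarrow> finite A \<Longrightarrow> A \<noteq> {} \<Longrightarrow> credal_set A P \<noteq> {}"
  using lower_envelope by blast

lemma credal_set_pos_at:
  assumes "coherent_on A P" "finite A" "A \<noteq> {}" "a \<in> A" "0 < upper P (indicator {a})"
  shows "\<exists>p\<in>credal_set A P. 0 < p a"
proof -
  obtain p where "p \<in> credal_set A P" "expect A p (\<lambda>x. - indicator {a} x) = P (\<lambda>x. - indicator {a} x)"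
    using lower_envelope[OF assms(1-3)] by blast
  then show ?thesis
    using assms(5) expect_indicator[OF assms(2,4)] by (force simp: upper_def expect_uminus)
qed

lemma credal_set_ex_pos:
  assumes "p \<in> credal_set A P"
  shows "\<exists>a\<in>A. 0 < p a"
proof (rule ccontr)
  assume "\<not> ?thesis"
  then have "sum p A \<le> 0"
    by (simp add: sum_nonpos not_less)
  then show False
    using credal_set_sum[OF assms] by simp
qed

section \<open>Strong product and independent natural extension\<close>

lemma coherent_on_INF:
  assumes I: "I \<noteq> {}" and L: "\<And>i. i \<in> I \<Longrightarrow> coherent_on C (L i)"
  shows "coherent_on C (\<lambda>f. INF i\<in>I. L i f)"
proof -
  have bdd: "bdd_below ((\<lambda>i. L i f) ` I)" for f
    using coherent_on_ge_Min[OF L] by (intro bdd_belowI2[of _ "Min (f ` C)"])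
  show ?thesis
    unfolding coherent_on_def
  proof (intro conjI allI impI)
    fix f
    show "Min (f ` C) \<le> (INF i\<in>I. L i f)"
      using I coherent_on_ge_Min[OF L] by (intro cINF_greatest)
  next
    fix c :: real and f
    assume c: "0 \<le> c"
    have mono: "mono (\<lambda>y::real. c * y)"
      using c by (auto intro: monoI mult_left_mono)
    have cont: "continuous (at_right (INF i\<in>I. L i f)) (\<lambda>y::real. c * y)"
      by (intro continuous_intros)
    have "c * (INF i\<in>I. L i f) = (INF y\<in>(\<lambda>i. L i f) ` I. c * y)"
      using continuous_at_Inf_mono[OF mono cont _ bdd] I by blast
    also have "\<dots> = (INF i\<in>I. c * L i f)"
      by (simp only: image_image)
    also have "\<dots> = (INF i\<in>I. L i (\<lambda>x. c * f x))"
      by (rule INF_cong[OF refl]) (metis coherent_on_scale[OF L c])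
    finally show "(INF i\<in>I. L i (\<lambda>x. c * f x)) = c * (INF i\<in>I. L i f)" ..
  next
    fix f g
    show "(INF i\<in>I. L i f) + (INF i\<in>I. L i g) \<le> (INF i\<in>I. L i (\<lambda>x. f x + g x))"
    proof (rule cINF_greatest[OF I])
      fix i
      assume i: "i \<in> I"
      have "(INF i\<in>I. L i f) + (INF i\<in>I. L i g) \<le> L i f + L i g"
        using cINF_lower[OF bdd i] by (simp add: add_mono)
      also have "\<dots> \<le> L i (\<lambda>x. f x + g x)"
        by (rule coherent_on_superadd[OF L[OF i]])
      finally show "(INF i\<in>I. L i f) + (INF i\<in>I. L i g) \<le> L i (\<lambda>x. f x + g x)" .
    qed
  qed
qed

lemma sum_weighted_le_Max:
  fixes w X :: "'a \<Rightarrow> real"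
  assumes "finite W" "\<And>x. x \<in> W \<Longrightarrow> 0 \<le> w x"
  shows "(\<Sum>x\<in>W. w x * X x) \<le> (\<Sum>x\<in>W. w x) * Max (X ` W)"
proof -
  have "(\<Sum>x\<in>W. w x * X x) \<le> (\<Sum>x\<in>W. w x * Max (X ` W))"
    using assms by (intro sum_mono mult_left_mono) auto
  then show ?thesis
    by (simp add: sum_distrib_right)
qed

lemma Max_nonneg_if_weighted_sum_nonneg:
  fixes w X :: "'a \<Rightarrow> real"
  assumes "finite W" "\<And>x. x \<in> W \<Longrightarrow> 0 \<le> w x" "0 < sum w W" "0 \<le> (\<Sum>x\<in>W. w x * X x)"
  shows "0 \<le> Max (X ` W)"
proof -
  have "0 \<le> sum w W * Max (X ` W)"
    using sum_weighted_le_Max[where W = W and w = w and X = X, OF assms(1,2)] assms(4) by linarith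
  then show ?thesis
    using assms(3) by (simp add: zero_le_mult_iff)
qed

lemma sum_subset_Times:
  assumes "finite (A \<times> B)" "W \<subseteq> A \<times> B"
  shows "(\<Sum>w\<in>W. F w) = (\<Sum>a\<in>A. \<Sum>b\<in>B. if (a, b) \<in> W then F (a, b) else (0::real))"
proof -
  have "(\<Sum>w\<in>W. F w) = (\<Sum>w\<in>A \<times> B. if w \<in> W then F w else 0)"
    using sum.inter_restrict[OF assms(1), of F W] assms(2) by (simp add: Int_absorb1)
  then show ?thesis
    by (simp add: sum.cartesian_product')
qed

lemma sum_indicator_mult:
  fixes F :: "'w \<Rightarrow> real"
  assumes "finite W" "T \<subseteq> W"
  shows "(\<Sum>w\<in>W. G w * (indicator T w * F w)) = (\<Sum>w\<in>T. G w * F w)"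
proof -
  have "(\<Sum>w\<in>W. G w * (indicator T w * F w)) = (\<Sum>w\<in>W. if w \<in> T then G w * F w else 0)"
    by (rule sum.cong) (auto simp: indicator_def)
  also have "\<dots> = (\<Sum>w\<in>T. G w * F w)"
    using sum.inter_restrict[OF assms(1), of "\<lambda>w. G w * F w" T] assms(2) by (simp add: Int_absorb1)
  finally show ?thesis .
qed

definition expect2 ::
  "'a set \<Rightarrow> 'b set \<Rightarrow> ('a \<Rightarrow> real) \<Rightarrow> ('b \<Rightarrow> real) \<Rightarrow> ('a \<times> 'b \<Rightarrow> real) \<Rightarrow> real" where
  "expect2 A B p1 p2 = expect (A \<times> B) (\<lambda>w. p1 (fst w) * p2 (snd w))"

lemma expect2_eq_iterated:
  "expect2 A B p1 p2 f = (\<Sum>a\<in>A. p1 a * (\<Sum>b\<in>B. p2 b * f (a, b)))"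
  "expect2 A B p1 p2 f = (\<Sum>b\<in>B. p2 b * (\<Sum>a\<in>A. p1 a * f (a, b)))"
proof -
  show "expect2 A B p1 p2 f = (\<Sum>a\<in>A. p1 a * (\<Sum>b\<in>B. p2 b * f (a, b)))"
    unfolding expect2_def expect_def sum.cartesian_product'
    by (simp add: sum_distrib_left mult.assoc)
  then show "expect2 A B p1 p2 f = (\<Sum>b\<in>B. p2 b * (\<Sum>a\<in>A. p1 a * f (a, b)))"
    by (simp add: sum_distrib_left mult.left_commute sum.swap[of _ A])
qed

lemma expect2_fst: "sum p2 B = 1 \<Longrightarrow> expect2 A B p1 p2 (\<lambda>(a, b). g a) = expect A p1 g"
  by (simp add: expect2_eq_iterated(1) expect_def sum_distrib_right[symmetric])

lemma expect2_snd: "sum p1 A = 1 \<Longrightarrow> expect2 A B p1 p2 (\<lambda>(a, b). h b) = expect B p2 h"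
  by (simp add: expect2_eq_iterated(2) expect_def sum_distrib_right[symmetric])

definition strong_product ::
  "'a set \<Rightarrow> 'b set \<Rightarrow> (('a \<Rightarrow> real) \<Rightarrow> real) \<Rightarrow> (('b \<Rightarrow> real) \<Rightarrow> real) \<Rightarrow> ('a \<times> 'b \<Rightarrow> real) \<Rightarrow> real" where
  "strong_product A B P1 P2 f = (INF p\<in>credal_set A P1 \<times> credal_set B P2. expect2 A B (fst p) (snd p) f)"

locale coherent_pair =
  fixes A :: "'a set" and B :: "'b set" and P1 P2
  assumes P1: "coherent_on A P1" and A: "finite A" "A \<noteq> {}"
    and P2: "coherent_on B P2" and B: "finite B" "B \<noteq> {}"
begin

abbreviation "SP \<equiv> strong_product A B P1 P2"

lemma Times_finite_nonempty: "finite (A \<times> B)" "A \<times> B \<noteq> {}"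
  using A B by simp_all

lemma credal_weight_nonneg:
  "p1 \<in> credal_set A P1 \<Longrightarrow> p2 \<in> credal_set B P2 \<Longrightarrow> w \<in> A \<times> B \<Longrightarrow> 0 \<le> p1 (fst w) * p2 (snd w)"
  using credal_set_nonneg[of p1 A P1 "fst w"] credal_set_nonneg[of p2 B P2 "snd w"] by auto

lemma credal_weight_sum:
  "p1 \<in> credal_set A P1 \<Longrightarrow> p2 \<in> credal_set B P2 \<Longrightarrow> (\<Sum>w\<in>A \<times> B. p1 (fst w) * p2 (snd w)) = 1"
  using expect2_fst[of p2 B A p1 "\<lambda>_. 1"]
  by (simp add: credal_set_sum expect2_def expect_def expect_const)

lemma coherent_on_expect2:
  "p1 \<in> credal_set A P1 \<Longrightarrow> p2 \<in> credal_set B P2 \<Longrightarrow> coherent_on (A \<times> B) (expect2 A B p1 p2)"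
  unfolding expect2_def
  by (rule coherent_on_expect) (simp_all add: Times_finite_nonempty credal_weight_nonneg credal_weight_sum)

lemma credal_products_nonempty: "credal_set A P1 \<times> credal_set B P2 \<noteq> {}"
  using credal_set_nonempty[OF P1 A] credal_set_nonempty[OF P2 B] by simp

lemma strong_product_coherent: "coherent_on (A \<times> B) SP"
  unfolding strong_product_def[abs_def]
  by (rule coherent_on_INF[OF credal_products_nonempty]) (auto intro: coherent_on_expect2)

lemma strong_product_le:
  assumes "p1 \<in> credal_set A P1" "p2 \<in> credal_set B P2"
  shows "SP f \<le> expect2 A B p1 p2 f"
proof -
  have "bdd_below ((\<lambda>p. expect2 A B (fst p) (snd p) f) ` (credal_set A P1 \<times> credal_set B P2))"
    using coherent_on_ge_Min[OF coherent_on_expect2] by (intro bdd_belowI2) auto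
  from cINF_lower[OF this, of "(p1, p2)"] assms show ?thesis
    by (simp add: strong_product_def)
qed

lemma strong_product_greatest:
  "(\<And>p1 p2. p1 \<in> credal_set A P1 \<Longrightarrow> p2 \<in> credal_set B P2 \<Longrightarrow> c \<le> expect2 A B p1 p2 f) \<Longrightarrow> c \<le> SP f"
  unfolding strong_product_def by (rule cINF_greatest[OF credal_products_nonempty]) auto

lemma strong_product_fst: "SP (\<lambda>(a, b). g a) = P1 g"
proof (rule antisym)
  obtain p1 where p1: "p1 \<in> credal_set A P1" "expect A p1 g = P1 g"
    using lower_envelope[OF P1 A] by blast
  obtain p2 where p2: "p2 \<in> credal_set B P2"
    using credal_set_nonempty[OF P2 B] by blast
  have "SP (\<lambda>(a, b). g a) \<le> expect2 A B p1 p2 (\<lambda>(a, b). g a)"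
    by (rule strong_product_le[OF p1(1) p2])
  also have "\<dots> = P1 g"
    by (simp only: expect2_fst[OF credal_set_sum[OF p2]] p1(2))
  finally show "SP (\<lambda>(a, b). g a) \<le> P1 g" .
  show "P1 g \<le> SP (\<lambda>(a, b). g a)"
    by (rule strong_product_greatest)
      (simp add: expect2_fst credal_set_sum credal_set_dominates)
qed

lemma strong_product_snd: "SP (\<lambda>(a, b). h b) = P2 h"
proof (rule antisym)
  obtain p2 where p2: "p2 \<in> credal_set B P2" "expect B p2 h = P2 h"
    using lower_envelope[OF P2 B] by blast
  obtain p1 where p1: "p1 \<in> credal_set A P1"
    using credal_set_nonempty[OF P1 A] by blast
  have "SP (\<lambda>(a, b). h b) \<le> expect2 A B p1 p2 (\<lambda>(a, b). h b)"
    by (rule strong_product_le[OF p1 p2(1)])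
  also have "\<dots> = P2 h"
    by (simp only: expect2_snd[OF credal_set_sum[OF p1]] p2(2))
  finally show "SP (\<lambda>(a, b). h b) \<le> P2 h" .
  show "P2 h \<le> SP (\<lambda>(a, b). h b)"
    by (rule strong_product_greatest)
      (simp add: expect2_snd credal_set_sum credal_set_dominates)
qed

abbreviation "Gsum f0 f1 f2 w \<equiv> G0 SP f0 w + G1 P1 f1 w + G2 P2 f2 w"

abbreviation "Supp f0 f1 f2 \<equiv> S0 A B f0 \<union> S1 A B f1 \<union> S2 A B f2"

lemma Supp_subset: "Supp f0 f1 f2 \<subseteq> A \<times> B"
  unfolding S0_def S1_def S2_def by auto

lemma sum_weighted_G0_nonneg:
  assumes p1: "p1 \<in> credal_set A P1" and p2: "p2 \<in> credal_set B P2"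
    and W: "S0 A B f \<subseteq> W" "W \<subseteq> A \<times> B"
  shows "0 \<le> (\<Sum>w\<in>W. p1 (fst w) * p2 (snd w) * G0 SP f w)"
proof (cases "\<exists>w\<in>A \<times> B. f w \<noteq> 0")
  case True
  then have "W = A \<times> B"
    using W unfolding S0_def by auto
  then have "(\<Sum>w\<in>W. p1 (fst w) * p2 (snd w) * G0 SP f w) = expect2 A B p1 p2 f - SP f"
    using credal_weight_sum[OF p1 p2]
    by (simp add: G0_def expect2_def expect_def right_diff_distrib sum_subtractf sum_distrib_right[symmetric])
  then show ?thesis
    using strong_product_le[OF p1 p2, of f] by simp
next
  case False
  then have "SP f = SP (\<lambda>_. 0)"
    by (intro coherent_on_cong[OF strong_product_coherent Times_finite_nonempty]) auto
  then have "\<forall>w\<in>W. G0 SP f w = 0"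
    using False W coherent_on_zero[OF strong_product_coherent] unfolding G0_def by auto
  then show ?thesis
    by simp
qed

lemma sum_weighted_G1_nonneg:
  assumes p1: "p1 \<in> credal_set A P1" and p2: "p2 \<in> credal_set B P2"
    and W: "S1 A B f \<subseteq> W" "W \<subseteq> A \<times> B"
  shows "0 \<le> (\<Sum>w\<in>W. p1 (fst w) * p2 (snd w) * G1 P1 f w)"
proof -
  have "(\<Sum>w\<in>W. p1 (fst w) * p2 (snd w) * G1 P1 f w) =
      (\<Sum>b\<in>B. p2 b * (\<Sum>a\<in>A. p1 a * (if (a, b) \<in> W then G1 P1 f (a, b) else 0)))"
    unfolding sum_subset_Times[OF Times_finite_nonempty(1) W(2)]
    by (subst sum.swap) (auto simp: sum_distrib_left intro!: sum.cong)
  moreover have "0 \<le> (\<Sum>a\<in>A. p1 a * (if (a, b) \<in> W then G1 P1 f (a, b) else 0))" if b: "b \<in> B" for b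
  proof (cases "\<exists>a'\<in>A. f (a', b) \<noteq> 0")
    case True
    then have "(a, b) \<in> W" if "a \<in> A" for a
      using W b that unfolding S1_def by auto
    then have "(\<Sum>a\<in>A. p1 a * (if (a, b) \<in> W then G1 P1 f (a, b) else 0))
        = expect A p1 (\<lambda>a. f (a, b)) - P1 (\<lambda>a. f (a, b))"
      using credal_set_sum[OF p1]
      by (simp add: G1_def expect_def right_diff_distrib sum_subtractf sum_distrib_right[symmetric])
    then show ?thesis
      using credal_set_dominates[OF p1, of "\<lambda>a. f (a, b)"] by simp
  next
    case False
    then have "P1 (\<lambda>a. f (a, b)) = P1 (\<lambda>_. 0)"
      by (intro coherent_on_cong[OF P1 A]) auto
    then have "\<forall>a\<in>A. G1 P1 f (a, b) = 0"
      using False coherent_on_zero[OF P1] unfolding G1_def by auto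
    then show ?thesis
      by (simp add: sum_nonneg)
  qed
  ultimately show ?thesis
    using credal_set_nonneg[OF p2] by (simp add: sum_nonneg)
qed

lemma sum_weighted_G2_nonneg:
  assumes p1: "p1 \<in> credal_set A P1" and p2: "p2 \<in> credal_set B P2"
    and W: "S2 A B f \<subseteq> W" "W \<subseteq> A \<times> B"
  shows "0 \<le> (\<Sum>w\<in>W. p1 (fst w) * p2 (snd w) * G2 P2 f w)"
proof -
  have "(\<Sum>w\<in>W. p1 (fst w) * p2 (snd w) * G2 P2 f w) =
      (\<Sum>a\<in>A. p1 a * (\<Sum>b\<in>B. p2 b * (if (a, b) \<in> W then G2 P2 f (a, b) else 0)))"
    unfolding sum_subset_Times[OF Times_finite_nonempty(1) W(2)]
    by (simp add: sum_distrib_left if_distrib mult.assoc cong: if_cong)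
  moreover have "0 \<le> (\<Sum>b\<in>B. p2 b * (if (a, b) \<in> W then G2 P2 f (a, b) else 0))" if a: "a \<in> A" for a
  proof (cases "\<exists>b'\<in>B. f (a, b') \<noteq> 0")
    case True
    then have "(a, b) \<in> W" if "b \<in> B" for b
      using W a that unfolding S2_def by auto
    then have "(\<Sum>b\<in>B. p2 b * (if (a, b) \<in> W then G2 P2 f (a, b) else 0))
        = expect B p2 (\<lambda>b. f (a, b)) - P2 (\<lambda>b. f (a, b))"
      using credal_set_sum[OF p2]
      by (simp add: G2_def expect_def right_diff_distrib sum_subtractf sum_distrib_right[symmetric])
    then show ?thesis
      using credal_set_dominates[OF p2, of "\<lambda>b. f (a, b)"] by simp
  next
    case False
    then have "P2 (\<lambda>b. f (a, b)) = P2 (\<lambda>_. 0)"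
      by (intro coherent_on_cong[OF P2 B]) auto
    then have "\<forall>b\<in>B. G2 P2 f (a, b) = 0"
      using False coherent_on_zero[OF P2] unfolding G2_def by auto
    then show ?thesis
      by (simp add: sum_nonneg)
  qed
  ultimately show ?thesis
    using credal_set_nonneg[OF p1] by (simp add: sum_nonneg)
qed

lemma sum_weighted_Gsum_nonneg:
  assumes "p1 \<in> credal_set A P1" "p2 \<in> credal_set B P2" "Supp f0 f1 f2 \<subseteq> W" "W \<subseteq> A \<times> B"
  shows "0 \<le> (\<Sum>w\<in>W. p1 (fst w) * p2 (snd w) * Gsum f0 f1 f2 w)"
  using sum_weighted_G0_nonneg[OF assms(1,2) _ assms(4), of f0]
    sum_weighted_G1_nonneg[OF assms(1,2) _ assms(4), of f1]
    sum_weighted_G2_nonneg[OF assms(1,2) _ assms(4), of f2] assms(3)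
  by (simp add: distrib_left sum.distrib)

lemma strong_product_jc_joint:
  "0 \<le> Max ((\<lambda>w. Gsum f0 f1 f2 w - (g w - SP g)) ` (A \<times> B \<union> Supp f0 f1 f2))"
proof -
  define X where "X w = Gsum f0 f1 f2 w - (g w - SP g)" for w
  define M where "M = Max (X ` (A \<times> B))"
  have "SP g - M \<le> expect2 A B p1 p2 g" if p1: "p1 \<in> credal_set A P1" and p2: "p2 \<in> credal_set B P2"
    for p1 p2
  proof -
    have "(\<Sum>w\<in>A \<times> B. p1 (fst w) * p2 (snd w) * X w)
        = (\<Sum>w\<in>A \<times> B. p1 (fst w) * p2 (snd w) * Gsum f0 f1 f2 w) - expect2 A B p1 p2 g
          + SP g * (\<Sum>w\<in>A \<times> B. p1 (fst w) * p2 (snd w))"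
      by (simp add: X_def expect2_def expect_def algebra_simps sum_subtractf sum.distrib sum_distrib_left)
    then have "SP g - expect2 A B p1 p2 g \<le> (\<Sum>w\<in>A \<times> B. p1 (fst w) * p2 (snd w) * X w)"
      using sum_weighted_Gsum_nonneg[OF p1 p2 Supp_subset order_refl, of f0 f1 f2]
        credal_weight_sum[OF p1 p2] by simp
    also have "\<dots> \<le> M"
      using sum_weighted_le_Max[OF Times_finite_nonempty(1), of "\<lambda>w. p1 (fst w) * p2 (snd w)" X]
        credal_weight_nonneg[OF p1 p2] credal_weight_sum[OF p1 p2]
      by (simp add: M_def mult.assoc)
    finally show ?thesis
      by simp
  qed
  then have "SP g - M \<le> SP g"
    by (rule strong_product_greatest)
  moreover have "A \<times> B \<union> Supp f0 f1 f2 = A \<times> B"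
    using Supp_subset by blast
  ultimately show ?thesis
    by (simp add: M_def X_def)
qed

end

lemma indep_nat_ext_eq_INF:
  "indep_nat_ext A B P1 P2 f = (INF P\<in>{P. indep_product A B P1 P2 P}. P f)"
  unfolding indep_nat_ext_def by (rule arg_cong[where f = Inf]) auto

lemma indep_product_factorization:
  assumes P: "indep_product A B P1 P2 P" and P1: "coherent_on A P1"
    and A: "A \<noteq> {}" and B: "B \<noteq> {}" and h: "0 \<le> P2 h"
  shows "P1 (indicator {o'}) * P2 h \<le> P (\<lambda>(a, b). indicator {o'} a * h b)"
proof -
  define t where "t = P2 h"
  define s where "s = P1 (indicator {o'})"
  define g where "g = (\<lambda>(a, b). indicator {o'} a * h b :: real)"
  define f1 where "f1 = (\<lambda>(a, b::'b). t * indicator {o'} a :: real)"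
  have cP: "coherent_on (A \<times> B) P" and snd: "\<And>h'. P (\<lambda>(a, b). h' b) = P2 h'"
    and jc: "jointly_coherent A B P P1 P2"
    using P unfolding indep_product_def by blast+
  have P2_zero: "P2 (\<lambda>_. 0) = 0"
    using snd[of "\<lambda>_. 0"] coherent_on_zero[OF cP] by (simp add: case_prod_beta')
  text \<open>Joint coherence tests the gamble \<open>G1 P1 f1 + G2 P2 g - (g - P g)\<close>, which is the
    constant \<open>P g - t * s\<close>.\<close>
  have val: "G0 P (\<lambda>_. 0) w + G1 P1 f1 w + G2 P2 g w - (g w - P g) = P g - t * s" for w
    using coherent_on_zero[OF cP] coherent_on_scale[OF P1 h[folded t_def], of "indicator {o'}"] P2_zero
    by (cases w) (auto simp: G0_def G1_def G2_def g_def f1_def s_def t_def indicator_def)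
  have "A \<times> B \<union> (S0 A B (\<lambda>_. 0) \<union> S1 A B f1 \<union> S2 A B g) = A \<times> B"
    unfolding S0_def S1_def S2_def by auto
  then have "(\<lambda>w. G0 P (\<lambda>_. 0) w + G1 P1 f1 w + G2 P2 g w - (g w - P g))
      ` (A \<times> B \<union> (S0 A B (\<lambda>_. 0) \<union> S1 A B f1 \<union> S2 A B g)) = {P g - t * s}"
    using A B by (simp only: val) auto
  then have "0 \<le> P g - t * s"
    using jc[unfolded jointly_coherent_def Let_def, rule_format, of "\<lambda>_. 0" f1 g g] by simp
  then show ?thesis
    by (simp add: g_def s_def t_def mult.commute)
qed

locale positive_pair = coherent_pair +
  assumes pos1: "\<And>a. a \<in> A \<Longrightarrow> 0 < upper P1 (indicator {a})"
    and pos2: "\<And>b. b \<in> B \<Longrightarrow> 0 < upper P2 (indicator {b})"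
begin

text \<open>Conditioning on \<open>B = b\<close> only sees the weights on \<open>A \<times> {b}\<close>; positivity of
  \<open>P2\<close> provides an element of its credal set that charges \<open>b\<close>, so these weights do not all
  vanish.\<close>

lemma strong_product_jc_given_snd:
  assumes b: "b \<in> B"
  shows "0 \<le> Max ((\<lambda>w. Gsum f0 f1 f2 w - indicator (A \<times> {b}) w * (g w - P1 (\<lambda>a. g (a, b))))
    ` (A \<times> {b} \<union> Supp f0 f1 f2))"
proof -
  define W where "W = A \<times> {b} \<union> Supp f0 f1 f2"
  define c where "c = P1 (\<lambda>a. g (a, b))"
  have W: "W \<subseteq> A \<times> B"
    using Supp_subset b by (auto simp: W_def)
  then have "finite W"
    using finite_subset[OF _ Times_finite_nonempty(1)] by blast
  obtain p1 where p1: "p1 \<in> credal_set A P1" "expect A p1 (\<lambda>a. g (a, b)) = c"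
    using lower_envelope[OF P1 A] unfolding c_def by blast
  obtain p2 where p2: "p2 \<in> credal_set B P2" "0 < p2 b"
    using credal_set_pos_at[OF P2 B b pos2[OF b]] by blast
  obtain a0 where a0: "a0 \<in> A" "0 < p1 a0"
    using credal_set_ex_pos[OF p1(1)] by blast
  have "(\<Sum>w\<in>W. p1 (fst w) * p2 (snd w) * (indicator (A \<times> {b}) w * (g w - c)))
      = (\<Sum>w\<in>A \<times> {b}. p1 (fst w) * p2 (snd w) * (g w - c))"
    by (rule sum_indicator_mult[OF \<open>finite W\<close>]) (simp add: W_def)
  also have "\<dots> = (\<Sum>a\<in>A. p1 a * p2 b * (g (a, b) - c))"
    by (simp add: sum.cartesian_product')
  also have "\<dots> = p2 b * (expect A p1 (\<lambda>a. g (a, b)) - c * sum p1 A)"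
    by (simp add: expect_def algebra_simps sum_subtractf sum_distrib_left)
  also have "\<dots> = 0"
    using p1 credal_set_sum[OF p1(1)] by simp
  finally have "(\<Sum>w\<in>W. p1 (fst w) * p2 (snd w) * (Gsum f0 f1 f2 w - indicator (A \<times> {b}) w * (g w - c)))
      = (\<Sum>w\<in>W. p1 (fst w) * p2 (snd w) * Gsum f0 f1 f2 w)"
    by (simp add: right_diff_distrib sum_subtractf)
  also have "0 \<le> \<dots>"
    using W by (intro sum_weighted_Gsum_nonneg[OF p1(1) p2(1)]) (simp_all add: W_def)
  finally have nonneg: "0 \<le> (\<Sum>w\<in>W. p1 (fst w) * p2 (snd w)
      * (Gsum f0 f1 f2 w - indicator (A \<times> {b}) w * (g w - c)))" .
  have pos: "0 < (\<Sum>w\<in>W. p1 (fst w) * p2 (snd w))"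
    using W \<open>finite W\<close> a0 p2(2) credal_weight_nonneg[OF p1(1) p2(1)]
    by (intro sum_pos2[of _ "(a0, b)"]) (auto simp: W_def)
  show ?thesis
    unfolding W_def[symmetric] c_def[symmetric]
    by (rule Max_nonneg_if_weighted_sum_nonneg[where w = "\<lambda>w. p1 (fst w) * p2 (snd w)",
          OF \<open>finite W\<close> _ pos nonneg])
      (use credal_weight_nonneg[OF p1(1) p2(1)] W in blast)
qed

lemma strong_product_jc_given_fst:
  assumes a: "a \<in> A"
  shows "0 \<le> Max ((\<lambda>w. Gsum f0 f1 f2 w - indicator ({a} \<times> B) w * (g w - P2 (\<lambda>b. g (a, b))))
    ` ({a} \<times> B \<union> Supp f0 f1 f2))"
proof -
  define W where "W = {a} \<times> B \<union> Supp f0 f1 f2"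
  define c where "c = P2 (\<lambda>b. g (a, b))"
  have W: "W \<subseteq> A \<times> B"
    using Supp_subset a by (auto simp: W_def)
  then have "finite W"
    using finite_subset[OF _ Times_finite_nonempty(1)] by blast
  obtain p2 where p2: "p2 \<in> credal_set B P2" "expect B p2 (\<lambda>b. g (a, b)) = c"
    using lower_envelope[OF P2 B] unfolding c_def by blast
  obtain p1 where p1: "p1 \<in> credal_set A P1" "0 < p1 a"
    using credal_set_pos_at[OF P1 A a pos1[OF a]] by blast
  obtain b0 where b0: "b0 \<in> B" "0 < p2 b0"
    using credal_set_ex_pos[OF p2(1)] by blast
  have "(\<Sum>w\<in>W. p1 (fst w) * p2 (snd w) * (indicator ({a} \<times> B) w * (g w - c)))
      = (\<Sum>w\<in>{a} \<times> B. p1 (fst w) * p2 (snd w) * (g w - c))"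
    by (rule sum_indicator_mult[OF \<open>finite W\<close>]) (simp add: W_def)
  also have "\<dots> = (\<Sum>b\<in>B. p1 a * p2 b * (g (a, b) - c))"
    by (simp add: sum.cartesian_product')
  also have "\<dots> = p1 a * (expect B p2 (\<lambda>b. g (a, b)) - c * sum p2 B)"
    by (simp add: expect_def algebra_simps sum_subtractf sum_distrib_left)
  also have "\<dots> = 0"
    using p2 credal_set_sum[OF p2(1)] by simp
  finally have "(\<Sum>w\<in>W. p1 (fst w) * p2 (snd w) * (Gsum f0 f1 f2 w - indicator ({a} \<times> B) w * (g w - c)))
      = (\<Sum>w\<in>W. p1 (fst w) * p2 (snd w) * Gsum f0 f1 f2 w)"
    by (simp add: right_diff_distrib sum_subtractf)
  also have "0 \<le> \<dots>"
    using W by (intro sum_weighted_Gsum_nonneg[OF p1(1) p2(1)]) (simp_all add: W_def)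
  finally have nonneg: "0 \<le> (\<Sum>w\<in>W. p1 (fst w) * p2 (snd w)
      * (Gsum f0 f1 f2 w - indicator ({a} \<times> B) w * (g w - c)))" .
  have pos: "0 < (\<Sum>w\<in>W. p1 (fst w) * p2 (snd w))"
    using W \<open>finite W\<close> b0 p1(2) credal_weight_nonneg[OF p1(1) p2(1)]
    by (intro sum_pos2[of _ "(a, b0)"]) (auto simp: W_def)
  show ?thesis
    unfolding W_def[symmetric] c_def[symmetric]
    by (rule Max_nonneg_if_weighted_sum_nonneg[where w = "\<lambda>w. p1 (fst w) * p2 (snd w)",
          OF \<open>finite W\<close> _ pos nonneg])
      (use credal_weight_nonneg[OF p1(1) p2(1)] W in blast)
qed

lemma strong_product_indep_product: "indep_product A B P1 P2 SP"
  unfolding indep_product_def jointly_coherent_def Let_def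
  using strong_product_coherent strong_product_fst strong_product_snd strong_product_jc_joint
    strong_product_jc_given_snd strong_product_jc_given_fst
  by blast

abbreviation "NE \<equiv> indep_nat_ext A B P1 P2"

lemma indep_nat_ext_coherent: "coherent_on (A \<times> B) NE"
  unfolding indep_nat_ext_eq_INF[abs_def]
  using strong_product_indep_product by (intro coherent_on_INF) (auto simp: indep_product_def)

lemma indep_nat_ext_le_strong_product: "NE f \<le> SP f"
proof -
  have "bdd_below ((\<lambda>P. P f) ` {P. indep_product A B P1 P2 P})"
    using coherent_on_ge_Min by (intro bdd_belowI2) (auto simp: indep_product_def)
  then show ?thesis
    unfolding indep_nat_ext_eq_INF using strong_product_indep_product by (auto intro: cINF_lower)
qed

lemma indep_nat_ext_greatest: "(\<And>P. indep_product A B P1 P2 P \<Longrightarrow> c \<le> P f) \<Longrightarrow> c \<le> NE f"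
  unfolding indep_nat_ext_eq_INF using strong_product_indep_product by (intro cINF_greatest) auto

lemma indep_nat_ext_coherent_positive: "coherent_positive_on (A \<times> B) NE"
  unfolding coherent_positive_on_def
proof (intro conjI ballI indep_nat_ext_coherent)
  fix v
  assume "v \<in> A \<times> B"
  then obtain a b where v: "v = (a, b)" "a \<in> A" "b \<in> B"
    by blast
  obtain p1 where p1: "p1 \<in> credal_set A P1" "0 < p1 a"
    using credal_set_pos_at[OF P1 A v(2) pos1[OF v(2)]] by blast
  obtain p2 where p2: "p2 \<in> credal_set B P2" "0 < p2 b"
    using credal_set_pos_at[OF P2 B v(3) pos2[OF v(3)]] by blast
  have "NE (\<lambda>x. - indicator {v} x) \<le> expect2 A B p1 p2 (\<lambda>x. - indicator {v} x)"
    using indep_nat_ext_le_strong_product strong_product_le[OF p1(1) p2(1)] order_trans by blast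
  also have "\<dots> = - (p1 a * p2 b)"
    using expect_indicator[OF Times_finite_nonempty(1), of v] v by (simp add: expect2_def expect_uminus)
  finally show "0 < upper NE (indicator {v})"
    using mult_pos_pos[OF p1(2) p2(2)] by (simp add: upper_def)
qed

end

section \<open>The imprecise hidden Markov model\<close>

lemma fun_upd_in_PiE: "x \<in> PiE {Suc k..n} X \<Longrightarrow> v \<in> X k \<Longrightarrow> k \<le> n \<Longrightarrow> x(k := v) \<in> PiE {k..n} X"
  using PiE_fun_upd[of v X k x "{Suc k..n}"] by (simp add: atLeastAtMost_insertL)

lemma bij_betw_fun_upd_PiE:
  assumes "m \<le> n"
  shows "bij_betw (\<lambda>(v, x). x(m := v)) (X m \<times> PiE {Suc m..n} X) (PiE {m..n} X)"
  using inj_combinator[of m "{Suc m..n}" X] PiE_insert_eq[of m "{Suc m..n}" X] assms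
  by (simp add: bij_betw_def atLeastAtMost_insertL)

lemma bij_betw_fun_upd_PiE_fst:
  assumes "m \<le> n"
  shows "bij_betw (\<lambda>(v, x, y). (x(m := v), y)) (X m \<times> (PiE {Suc m..n} X \<times> Y)) (PiE {m..n} X \<times> Y)"
proof -
  have "bij_betw (\<lambda>(v, x, y). ((v, x), y)) (X m \<times> (PiE {Suc m..n} X \<times> Y)) ((X m \<times> PiE {Suc m..n} X) \<times> Y)"
    by (rule bij_betwI[where g = "\<lambda>((v, x), y). (v, x, y)"]) auto
  from bij_betw_trans[OF this bij_betw_map_prod[OF bij_betw_fun_upd_PiE[OF assms] bij_betw_id]]
  show ?thesis
    by (rule bij_betw_cong[THEN iffD1, rotated]) auto
qed

lemma bij_betw_fun_upd_PiE_snd: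
  assumes "m \<le> n"
  shows "bij_betw (\<lambda>(v, y, x). (y, x(m := v))) (X m \<times> (Y \<times> PiE {Suc m..n} X)) (Y \<times> PiE {m..n} X)"
proof -
  have "bij_betw (\<lambda>(v, y, x). (y, v, x)) (X m \<times> (Y \<times> PiE {Suc m..n} X)) (Y \<times> (X m \<times> PiE {Suc m..n} X))"
    by (rule bij_betwI[where g = "\<lambda>(y, v, x). (v, y, x)"]) auto
  from bij_betw_trans[OF this bij_betw_map_prod[OF bij_betw_id bij_betw_fun_upd_PiE[OF assms]]]
  show ?thesis
    by (rule bij_betw_cong[THEN iffD1, rotated]) auto
qed

lemma finite_PiE_atLeastAtMost:
  fixes m n :: nat
  assumes "\<And>i. i \<in> {m..n} \<Longrightarrow> finite (X i) \<and> X i \<noteq> {}"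
  shows "finite (PiE {m..n} X) \<and> PiE {m..n} X \<noteq> {}"
  using assms by (auto simp: PiE_eq_empty_iff intro!: finite_PiE)

definition opt_gamble ::
  "nat \<Rightarrow> nat \<Rightarrow> (nat \<Rightarrow> 'o) \<Rightarrow> (nat \<Rightarrow> 'x) \<Rightarrow> (nat \<Rightarrow> 'x) \<Rightarrow> ('x, 'o) seqgamble" where
  "opt_gamble n k os x xh =
     (\<lambda>(x', p'). (if \<forall>i \<in> {k..n}. p' i = os i then 1 else 0) *
                 ((if \<forall>i \<in> {k..n}. x' i = x i then 1 else 0)
                  - (if \<forall>i \<in> {k..n}. x' i = xh i then 1 else 0)))"

lemma opt_eq_opt_gamble:
  "opt n Xs Os Q S k z os =
     {xh \<in> PiE {k..n} Xs. \<forall>x \<in> PiE {k..n} Xs. Phmm n Xs Os Q S k z (opt_gamble n k os x xh) \<le> 0}"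
  unfolding opt_def opt_gamble_def ..

lemma opt_gamble_restrict: "opt_gamble n k os x (restrict xh {k..n}) = opt_gamble n k os x xh"
  unfolding opt_gamble_def by simp

lemma opt_gamble_fun_upd_outside:
  "j \<notin> {k..n} \<Longrightarrow> opt_gamble n k os x xh (x', p(j := o')) = opt_gamble n k os x xh (x', p)"
  unfolding opt_gamble_def by (auto intro!: arg_cong2[where f = "(*)"])

lemma opt_gamble_step:
  assumes "k \<le> n"
  shows "opt_gamble n k os (x(k := xh k)) xh (x'(k := zk), p) =
    (if zk = xh k then indicator {os k} (p k) * opt_gamble n (Suc k) os x xh (x', p) else 0)"
proof -
  have "{k..n} = insert k {Suc k..n}"
    using assms by (simp add: atLeastAtMost_insertL)
  then show ?thesis
    unfolding opt_gamble_def by (simp add: indicator_def)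
qed

locale imprecise_hmm =
  fixes n :: nat and Xs :: "nat \<Rightarrow> 'x set" and Os :: "nat \<Rightarrow> 'o set"
    and Q :: "nat \<Rightarrow> 'x \<Rightarrow> ('x \<Rightarrow> real) \<Rightarrow> real"
    and S :: "nat \<Rightarrow> 'x \<Rightarrow> ('o \<Rightarrow> real) \<Rightarrow> real"
  assumes Xfin: "\<And>i. i \<in> {1..n} \<Longrightarrow> finite (Xs i) \<and> Xs i \<noteq> {}"
    and Ofin: "\<And>i. i \<in> {1..n} \<Longrightarrow> finite (Os i) \<and> Os i \<noteq> {}"
    and Qcoh: "\<And>i y. i \<in> {1..n} \<Longrightarrow> y \<in> Xs (i - 1) \<Longrightarrow> coherent_on (Xs i) (Q i y)"
    and Scoh: "\<And>i y. i \<in> {1..n} \<Longrightarrow> y \<in> Xs i \<Longrightarrow> coherent_on (Os i) (S i y)"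
    and Qpos: "\<And>i y x. i \<in> {1..n} \<Longrightarrow> y \<in> Xs (i - 1) \<Longrightarrow> x \<in> Xs i \<Longrightarrow>
                 0 < upper (Q i y) (indicator {x})"
    and Spos: "\<And>i y p. i \<in> {1..n} \<Longrightarrow> y \<in> Xs i \<Longrightarrow> p \<in> Os i \<Longrightarrow>
                 0 < upper (S i y) (indicator {p})"
begin

abbreviation "E \<equiv> Ehmm n Xs Os Q S"

abbreviation "Pk \<equiv> Phmm n Xs Os Q S"

definition E_domain :: "nat \<Rightarrow> ((nat \<Rightarrow> 'x) \<times> (nat \<Rightarrow> 'o)) set" where
  "E_domain k = PiE {Suc k..n} Xs \<times> PiE {k..n} Os"

definition P_domain :: "nat \<Rightarrow> ((nat \<Rightarrow> 'x) \<times> (nat \<Rightarrow> 'o)) set" where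
  "P_domain k = PiE {k..n} Xs \<times> PiE {k..n} Os"

lemma finite_E_domain: "1 \<le> k \<Longrightarrow> finite (E_domain k) \<and> E_domain k \<noteq> {}"
  using finite_PiE_atLeastAtMost[of "Suc k" n Xs] finite_PiE_atLeastAtMost[of k n Os] Xfin Ofin
  by (auto simp: E_domain_def)

lemma finite_P_domain: "1 \<le> k \<Longrightarrow> finite (P_domain k) \<and> P_domain k \<noteq> {}"
  using finite_PiE_atLeastAtMost[of k n Xs] finite_PiE_atLeastAtMost[of k n Os] Xfin Ofin
  by (auto simp: P_domain_def)

lemma Q_coherent_positive: "i \<in> {1..n} \<Longrightarrow> y \<in> Xs (i - 1) \<Longrightarrow> coherent_positive_on (Xs i) (Q i y)"
  using Qcoh Qpos by (simp add: coherent_positive_on_def)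

lemma S_coherent_positive: "i \<in> {1..n} \<Longrightarrow> y \<in> Xs i \<Longrightarrow> coherent_positive_on (Os i) (S i y)"
  using Scoh Spos by (simp add: coherent_positive_on_def)

lemma E_last: "E n z g = S n z (\<lambda>on. g (\<lambda>_. undefined, (\<lambda>_. undefined)(n := on)))"
  by (simp add: Ehmm_def)

lemma E_step:
  assumes "k < n"
  shows "E k z g =
    indep_nat_ext (Os k) (P_domain (Suc k)) (S k z) (Pk (Suc k) z) (\<lambda>(ok, x, p). g (x, p(k := ok)))"
proof -
  have "n - k = Suc (n - Suc k)" "n - Suc (n - Suc k) = k"
    using assms by auto
  then show ?thesis
    by (simp add: Ehmm_def Phmm_def[abs_def] P_domain_def Let_def)
qed

lemma E_last_coherent_positive:
  assumes "1 \<le> n" "z \<in> Xs n"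
  shows "coherent_positive_on (E_domain n) (E n z)"
proof -
  have "bij_betw (\<lambda>on. (\<lambda>_. undefined, (\<lambda>_. undefined)(n := on))) (Os n) (E_domain n)"
    by (rule bij_betw_byWitness[where f' = "\<lambda>(x, p). p n"])
      (auto simp: E_domain_def PiE_iff extensional_def fun_eq_iff split: if_splits)
  from coherent_positive_on_compose[OF S_coherent_positive _ _ this] assms Ofin[of n] show ?thesis
    by (simp add: E_last[abs_def])
qed

lemma Pk_coherent_positive:
  assumes k: "k < n" and z: "z \<in> Xs k"
    and E: "\<And>zk. zk \<in> Xs (Suc k) \<Longrightarrow> coherent_positive_on (E_domain (Suc k)) (E (Suc k) zk)"
  shows "coherent_positive_on (P_domain (Suc k)) (Pk (Suc k) z)"
proof -
  have "bij_betw (\<lambda>(zk, x, y). (x(Suc k := zk), y)) (Xs (Suc k) \<times> E_domain (Suc k)) (P_domain (Suc k))"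
    unfolding E_domain_def P_domain_def using k by (intro bij_betw_fun_upd_PiE_fst) simp
  then have "coherent_positive_on (P_domain (Suc k))
      (\<lambda>h. Q (Suc k) z (\<lambda>zk. E (Suc k) zk (\<lambda>w. h ((\<lambda>zk (x, y). (x(Suc k := zk), y)) zk w))))"
    using k z Xfin[of "Suc k"] finite_E_domain[of "Suc k"]
    by (intro coherent_positive_on_marginal_ext[OF Q_coherent_positive _ _ E]) (auto simp: split_beta')
  then show ?thesis
    by (simp add: Phmm_def[abs_def] split_beta')
qed

lemma positive_pair_S_Pk:
  assumes k: "1 \<le> k" "k < n" and z: "z \<in> Xs k"
    and E: "\<And>zk. zk \<in> Xs (Suc k) \<Longrightarrow> coherent_positive_on (E_domain (Suc k)) (E (Suc k) zk)"
  shows "positive_pair (Os k) (P_domain (Suc k)) (S k z) (Pk (Suc k) z)"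
  using S_coherent_positive[of k z] Pk_coherent_positive[OF k(2) z E] Ofin[of k]
    finite_P_domain[of "Suc k"] k z
  by (simp add: positive_pair_def positive_pair_axioms_def coherent_pair_def coherent_positive_on_def)

lemma E_coherent_positive_from_Suc:
  assumes k: "1 \<le> k" "k < n" and z: "z \<in> Xs k"
    and E: "\<And>zk. zk \<in> Xs (Suc k) \<Longrightarrow> coherent_positive_on (E_domain (Suc k)) (E (Suc k) zk)"
  shows "coherent_positive_on (E_domain k) (E k z)"
proof -
  interpret positive_pair "Os k" "P_domain (Suc k)" "S k z" "Pk (Suc k) z"
    by (rule positive_pair_S_Pk[OF k z E])
  have "bij_betw (\<lambda>(ok, x, p). (x, p(k := ok))) (Os k \<times> P_domain (Suc k)) (E_domain k)"
    unfolding E_domain_def P_domain_def using k by (intro bij_betw_fun_upd_PiE_snd) simp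
  from coherent_positive_on_compose[OF indep_nat_ext_coherent_positive Times_finite_nonempty this]
  show ?thesis
    by (simp add: E_step[OF k(2), abs_def] split_beta')
qed

lemma E_coherent_positive:
  assumes "1 \<le> k" "k \<le> n" "z \<in> Xs k"
  shows "coherent_positive_on (E_domain k) (E k z)"
proof -
  have "\<forall>z\<in>Xs k. coherent_positive_on (E_domain k) (E k z)"
    using assms(2)
  proof (induction rule: inc_induct)
    case base
    then show ?case
      using E_last_coherent_positive assms(1,2) by simp
  next
    case (step m)
    then show ?case
      using E_coherent_positive_from_Suc assms(1) by simp
  qed
  then show ?thesis
    using assms(3) by blast
qed

lemma E_factorization:
  assumes k: "1 \<le> k" "k < n" and z: "z \<in> Xs k" and h: "0 \<le> Pk (Suc k) z h"
    and f: "\<And>ok x p. f (x, p(k := ok)) = indicator {o'} ok * h (x, p)"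
  shows "S k z (indicator {o'}) * Pk (Suc k) z h \<le> E k z f"
proof -
  interpret positive_pair "Os k" "P_domain (Suc k)" "S k z" "Pk (Suc k) z"
    using k z by (intro positive_pair_S_Pk E_coherent_positive) simp_all
  have "S k z (indicator {o'}) * Pk (Suc k) z h \<le> NE (\<lambda>(a, b). indicator {o'} a * h b)"
  proof (rule indep_nat_ext_greatest)
    fix P
    assume "indep_product (Os k) (P_domain (Suc k)) (S k z) (Pk (Suc k) z) P"
    from indep_product_factorization[where o' = o' and h = h, OF this P1 A(2) B(2) h]
    show "S k z (indicator {o'}) * Pk (Suc k) z h \<le> P (\<lambda>(a, b). indicator {o'} a * h b)" .
  qed
  also have "(\<lambda>(a, b). indicator {o'} a * h b) = (\<lambda>(ok, x, p). f (x, p(k := ok)))"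
    by (auto simp: f)
  finally show ?thesis
    using k by (simp add: E_step)
qed

lemma Pk_opt_gamble_ge:
  assumes k: "1 \<le> k" "k < n" and z: "z \<in> Xs (k - 1)" and xhk: "xh k \<in> Xs k"
    and t: "0 \<le> Pk (Suc k) (xh k) (opt_gamble n (Suc k) os x xh)"
  shows "Q k z (indicator {xh k})
      * (S k (xh k) (indicator {os k}) * Pk (Suc k) (xh k) (opt_gamble n (Suc k) os x xh))
    \<le> Pk k z (opt_gamble n k os (x(k := xh k)) xh)"
proof -
  define G where "G = opt_gamble n k os (x(k := xh k)) xh"
  define H where "H = (\<lambda>zk. E k zk (\<lambda>(x', p). G (x'(k := zk), p)))"
  define c where
    "c = S k (xh k) (indicator {os k}) * Pk (Suc k) (xh k) (opt_gamble n (Suc k) os x xh)"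
  have Xk: "finite (Xs k)" "Xs k \<noteq> {}" and Ok: "finite (Os k)" "Os k \<noteq> {}"
    using Xfin[of k] Ofin[of k] k by auto
  have H_other: "H zk = 0" if "zk \<in> Xs k" "zk \<noteq> xh k" for zk
  proof -
    have "coherent_on (E_domain k) (E k zk)"
      using E_coherent_positive[of k zk] k that by (simp add: coherent_positive_on_def)
    then show ?thesis
      using coherent_on_zero that k by (simp add: H_def G_def opt_gamble_step case_prod_beta')
  qed
  have "c \<le> H (xh k)"
    unfolding c_def H_def
    using k by (intro E_factorization[OF k xhk t])
      (simp add: G_def opt_gamble_step opt_gamble_fun_upd_outside)
  have "coherent_on (Os k) (S k (xh k))"
    using Scoh[of k "xh k"] k xhk by simp
  then have "0 \<le> S k (xh k) (indicator {os k})"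
    by (rule coherent_on_nonneg[OF _ Ok]) simp
  then have "0 \<le> c"
    using t by (simp add: c_def)
  have "coherent_on (Xs k) (Q k z)"
    using Qcoh[of k z] k z by simp
  then have "c * Q k z (indicator {xh k}) \<le> Q k z H"
  proof (rule coherent_on_ge_scaled_indicator[OF _ Xk \<open>0 \<le> c\<close>])
    fix zk
    assume "zk \<in> Xs k"
    then show "c * indicator {xh k} zk \<le> H zk"
      using H_other \<open>c \<le> H (xh k)\<close> by (cases "zk = xh k") simp_all
  qed
  then show ?thesis
    by (simp add: Phmm_def H_def G_def c_def mult.commute)
qed

end

theorem theorem2:
  fixes n :: nat and Xs :: "nat \<Rightarrow> 'x set" and Os :: "nat \<Rightarrow> 'o set"
    and x0 :: 'x
    and Q :: "nat \<Rightarrow> 'x \<Rightarrow> ('x \<Rightarrow> real) \<Rightarrow> real"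
    and S :: "nat \<Rightarrow> 'x \<Rightarrow> ('o \<Rightarrow> real) \<Rightarrow> real"
    and os :: "nat \<Rightarrow> 'o" and k :: nat and z :: 'x and xh :: "nat \<Rightarrow> 'x"
  assumes n: "n \<ge> 1"
    and X0: "Xs 0 = {x0}"
    and Xfin: "\<And>i. i \<in> {1..n} \<Longrightarrow> finite (Xs i) \<and> Xs i \<noteq> {}"
    and Ofin: "\<And>i. i \<in> {1..n} \<Longrightarrow> finite (Os i) \<and> Os i \<noteq> {}"
    and Qcoh: "\<And>i y. i \<in> {1..n} \<Longrightarrow> y \<in> Xs (i - 1) \<Longrightarrow> coherent_on (Xs i) (Q i y)"
    and Scoh: "\<And>i y. i \<in> {1..n} \<Longrightarrow> y \<in> Xs i \<Longrightarrow> coherent_on (Os i) (S i y)"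
    and Qpos: "\<And>i y x. i \<in> {1..n} \<Longrightarrow> y \<in> Xs (i - 1) \<Longrightarrow> x \<in> Xs i \<Longrightarrow>
                 upper (Q i y) (indicator {x}) > 0"
    and Spos: "\<And>i y p. i \<in> {1..n} \<Longrightarrow> y \<in> Xs i \<Longrightarrow> p \<in> Os i \<Longrightarrow>
                 upper (S i y) (indicator {p}) > 0"
    and o_seq: "\<And>i. i \<in> {1..n} \<Longrightarrow> os i \<in> Os i"
    and k: "1 \<le> k" "k \<le> n - 1"
    and z: "z \<in> Xs (k - 1)"
    and xh: "xh \<in> PiE {k..n} Xs"
    and Qhat: "Q k z (indicator {xh k}) > 0"
    and Shat: "S k (xh k) (indicator {os k}) > 0"
    and opt_k: "xh \<in> opt n Xs Os Q S k z os"
  shows "restrict xh {Suc k..n} \<in> opt n Xs Os Q S (Suc k) (xh k) os"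
proof -
  interpret imprecise_hmm n Xs Os Q S
    using Xfin Ofin Qcoh Scoh Qpos Spos by unfold_locales auto
  have kn: "k < n"
    using k n by simp
  have xhk: "xh k \<in> Xs k"
    using xh kn by (auto simp: PiE_iff)
  have "Pk (Suc k) (xh k) (opt_gamble n (Suc k) os x xh) \<le> 0" if x: "x \<in> PiE {Suc k..n} Xs" for x
  proof (rule ccontr)
    assume "\<not> ?thesis"
    then have t: "0 < Pk (Suc k) (xh k) (opt_gamble n (Suc k) os x xh)"
      by simp
    have "x(k := xh k) \<in> PiE {k..n} Xs"
      using fun_upd_in_PiE[OF x xhk] kn by simp
    then have "Pk k z (opt_gamble n k os (x(k := xh k)) xh) \<le> 0"
      using opt_k by (simp add: opt_eq_opt_gamble)
    moreover have "0 < Q k z (indicator {xh k}) * (S k (xh k) (indicator {os k})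
        * Pk (Suc k) (xh k) (opt_gamble n (Suc k) os x xh))"
      using Qhat Shat t by simp
    ultimately show False
      using Pk_opt_gamble_ge[OF k(1) kn z xhk less_imp_le[OF t]] by linarith
  qed
  then show ?thesis
    using xh by (simp add: opt_eq_opt_gamble opt_gamble_restrict restrict_PiE_iff PiE_iff)
qed

end
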